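(* Let $S$ be an AG-groupoid with a zero element $0$. Let $\mathcal{D}$ be the set of all bi-ideals of $S$ and let $\Omega$ be the set of all strongly irreducible bi-ideals $J$ of $S$ with $J\neq S$. For $B\in\mathcal{D}$ put $O_{B}=\{J\in\Omega: B\not\subseteq J\}$. Then $\Gamma(\Omega)=\{O_{B}: B\in\mathcal{D}\}$ is a topology on $\Omega$. Moreover, the map $\phi:\mathcal{D}\to\Gamma(\Omega)$, $\phi(B)=O_{B}$, preserves finite intersections and arbitrary unions, in the sense that $\phi(B_{1}\cap B_{2})=\phi(B_{1})\cap\phi(B_{2})$ for all $B_1,B_2\in\mathcal D$ and $\phi(\langle\bigcup_{\alpha}B_{\alpha}\rangle)=\bigcup_{\alpha}\phi(B_{\alpha})$ for every family $\{B_\alpha\}\subseteq\mathcal D$, where $\langle X\rangle$ denotes the bi-ideal of $S$ generated by $X$ (the smallest bi-ideal containing $X$).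
   Context: An AG-groupoid is a set $S$ with a binary operation satisfying $(ab)c=(cb)a$ for all $a,b,c\in S$. A zero element is an element $0$ with $0s=s0=0$ for all $s\in S$. For nonempty subsets, $AB=\{ab:a\in A,b\in B\}$. A bi-ideal of $S$ is a nonempty subset $B$ with $BB\subseteq B$ and $(BS)B\subseteq B$. A bi-ideal $B$ is strongly irreducible if for all bi-ideals $B_{1},B_{2}$ of $S$, $B_{1}\cap B_{2}\subseteq B$ implies $B_{1}\subseteq B$ or $B_{2}\subseteq B$. *)

theory Defs
  imports "HOL-Analysis.Analysis"
begin

definition AG_groupoid :: "('a \<Rightarrow> 'a \<Rightarrow> 'a) \<Rightarrow> bool" where
  "AG_groupoid m \<longleftrightarrow> (\<forall>a b c. m (m a b) c = m (m c b) a)"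

definition is_zero :: "('a \<Rightarrow> 'a \<Rightarrow> 'a) \<Rightarrow> 'a \<Rightarrow> bool" where
  "is_zero m z \<longleftrightarrow> (\<forall>s. m z s = z \<and> m s z = z)"

definition setmult :: "('a \<Rightarrow> 'a \<Rightarrow> 'a) \<Rightarrow> 'a set \<Rightarrow> 'a set \<Rightarrow> 'a set" where
  "setmult m A B = {m a b | a b. a \<in> A \<and> b \<in> B}"

definition bi_ideal :: "('a \<Rightarrow> 'a \<Rightarrow> 'a) \<Rightarrow> 'a set \<Rightarrow> bool" where
  "bi_ideal m B \<longleftrightarrow> B \<noteq> {} \<and> setmult m B B \<subseteq> B
     \<and> setmult m (setmult m B UNIV) B \<subseteq> B"

definition strongly_irreducible :: "('a \<Rightarrow> 'a \<Rightarrow> 'a) \<Rightarrow> 'a set \<Rightarrow> bool" where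
  "strongly_irreducible m B \<longleftrightarrow> bi_ideal m B \<and>
     (\<forall>B1 B2. bi_ideal m B1 \<longrightarrow> bi_ideal m B2 \<longrightarrow> B1 \<inter> B2 \<subseteq> B \<longrightarrow> B1 \<subseteq> B \<or> B2 \<subseteq> B)"

definition gen_bi_ideal :: "('a \<Rightarrow> 'a \<Rightarrow> 'a) \<Rightarrow> 'a set \<Rightarrow> 'a set" where
  "gen_bi_ideal m X = \<Inter>{B. bi_ideal m B \<and> X \<subseteq> B}"

definition bi_ideals :: "('a \<Rightarrow> 'a \<Rightarrow> 'a) \<Rightarrow> 'a set set" where
  "bi_ideals m = {B. bi_ideal m B}"

definition Omega :: "('a \<Rightarrow> 'a \<Rightarrow> 'a) \<Rightarrow> 'a set set" where
  "Omega m = {J. strongly_irreducible m J \<and> J \<noteq> UNIV}"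

definition O_set :: "('a \<Rightarrow> 'a \<Rightarrow> 'a) \<Rightarrow> 'a set \<Rightarrow> 'a set set" where
  "O_set m B = {J \<in> Omega m. \<not> B \<subseteq> J}"

definition Gamma :: "('a \<Rightarrow> 'a \<Rightarrow> 'a) \<Rightarrow> 'a set set set" where
  "Gamma m = O_set m ` bi_ideals m"

definition topology_on :: "'b set \<Rightarrow> 'b set set \<Rightarrow> bool" where
  "topology_on X T \<longleftrightarrow> T \<subseteq> Pow X \<and> X \<in> T \<and> istopology (\<lambda>U. U \<in> T)"

end

theory Submission
  imports Defs
begin

(* The open sets O_B = {J \<in> \<Omega>. B \<not>\<subseteq> J} behave like the "basic open sets" of a
   spectrum.  The proof needs only two facts about bi-ideals, both consequences
   of the zero element z: every bi-ideal contains z, hence an arbitrary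
   intersection of bi-ideals is again a bi-ideal (so intersections and the
   generated bi-ideal <X> stay inside \<D>).  Then:
   - O_{B1 \<inter> B2} = O_{B1} \<inter> O_{B2} is exactly strong irreducibility;
   - O_{<\<Union>B\<alpha>>} = \<Union> O_{B\<alpha>} holds because a bi-ideal J contains <\<Union>B\<alpha>> iff it
     contains every B\<alpha>;
   - O_S = \<Omega>. *)

text \<open>The zero lies in every bi-ideal: for b \<in> B we have (b z) b = z \<in> (B S) B.\<close>
lemma zero_in_bi_ideal:
  assumes "is_zero m z" and "bi_ideal m B"
  shows "z \<in> B"
proof -
  obtain b where b: "b \<in> B" using assms(2) unfolding bi_ideal_def by blast
  have "m (m b z) b \<in> setmult m (setmult m B UNIV) B"
    unfolding setmult_def using b by blast
  moreover have "m (m b z) b = z" using assms(1) unfolding is_zero_def by simp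
  ultimately show ?thesis using assms(2) unfolding bi_ideal_def by auto
qed

lemma bi_ideal_UNIV: "bi_ideal m UNIV"
  unfolding bi_ideal_def by auto

text \<open>Any intersection of bi-ideals is a bi-ideal; nonemptiness comes from the zero.\<close>
lemma bi_ideal_Inter:
  assumes "is_zero m z" and "\<And>B. B \<in> F \<Longrightarrow> bi_ideal m B"
  shows "bi_ideal m (\<Inter>F)"
proof -
  have closed: "\<And>B. B \<in> F \<Longrightarrow> setmult m B B \<subseteq> B \<and> setmult m (setmult m B UNIV) B \<subseteq> B"
    using assms(2) unfolding bi_ideal_def by blast
  have "z \<in> \<Inter>F" using zero_in_bi_ideal[OF assms(1) assms(2)] by blast
  moreover have "setmult m (\<Inter>F) (\<Inter>F) \<subseteq> \<Inter>F"
    using closed unfolding setmult_def by blast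
  moreover have "setmult m (setmult m (\<Inter>F) UNIV) (\<Inter>F) \<subseteq> \<Inter>F"
    using closed unfolding setmult_def by blast
  ultimately show ?thesis unfolding bi_ideal_def by blast
qed

lemma bi_ideal_Int:
  assumes "is_zero m z" and "bi_ideal m B1" and "bi_ideal m B2"
  shows "bi_ideal m (B1 \<inter> B2)"
  using bi_ideal_Inter[OF assms(1), of "{B1, B2}"] assms(2,3) by auto

lemma bi_ideal_gen_bi_ideal:
  assumes "is_zero m z"
  shows "bi_ideal m (gen_bi_ideal m X)"
  unfolding gen_bi_ideal_def by (rule bi_ideal_Inter[OF assms]) auto

lemma gen_bi_ideal_subset_iff:
  assumes "bi_ideal m J"
  shows "gen_bi_ideal m X \<subseteq> J \<longleftrightarrow> X \<subseteq> J"
  using assms unfolding gen_bi_ideal_def by blast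

lemma Omega_bi_ideal: "J \<in> Omega m \<Longrightarrow> bi_ideal m J"
  unfolding Omega_def strongly_irreducible_def by simp

lemma O_set_UNIV: "O_set m UNIV = Omega m"
  unfolding O_set_def Omega_def by blast

text \<open>Finite intersections: this is precisely strong irreducibility of the points J.\<close>
lemma O_set_Int:
  assumes "bi_ideal m B1" and "bi_ideal m B2"
  shows "O_set m (B1 \<inter> B2) = O_set m B1 \<inter> O_set m B2"
proof -
  have "B1 \<inter> B2 \<subseteq> J \<longleftrightarrow> B1 \<subseteq> J \<or> B2 \<subseteq> J" if "J \<in> Omega m" for J
  proof
    assume "B1 \<inter> B2 \<subseteq> J"
    moreover have "strongly_irreducible m J" using that unfolding Omega_def by simp
    ultimately show "B1 \<subseteq> J \<or> B2 \<subseteq> J"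
      using assms unfolding strongly_irreducible_def by blast
  qed blast
  then show ?thesis unfolding O_set_def by auto
qed

lemma O_set_gen_Union:
  "O_set m (gen_bi_ideal m (\<Union>\<B>)) = (\<Union>B\<in>\<B>. O_set m B)"
proof -
  have "\<not> gen_bi_ideal m (\<Union>\<B>) \<subseteq> J \<longleftrightarrow> (\<exists>B\<in>\<B>. \<not> B \<subseteq> J)" if "J \<in> Omega m" for J
  proof -
    have "gen_bi_ideal m (\<Union>\<B>) \<subseteq> J \<longleftrightarrow> \<Union>\<B> \<subseteq> J"
      using gen_bi_ideal_subset_iff[OF Omega_bi_ideal[OF that]] .
    then show ?thesis by (simp add: Sup_le_iff)
  qed
  then show ?thesis unfolding O_set_def by auto
qed

lemma Gamma_Int_closed:
  assumes "is_zero m z" and "U \<in> Gamma m" and "V \<in> Gamma m"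
  shows "U \<inter> V \<in> Gamma m"
proof -
  obtain B1 B2 where B: "bi_ideal m B1" "bi_ideal m B2"
    and UV: "U = O_set m B1" "V = O_set m B2"
    using assms(2,3) unfolding Gamma_def bi_ideals_def by blast
  have "U \<inter> V = O_set m (B1 \<inter> B2)" using UV O_set_Int[OF B] by simp
  moreover have "B1 \<inter> B2 \<in> bi_ideals m"
    using bi_ideal_Int[OF assms(1) B] unfolding bi_ideals_def by simp
  ultimately show ?thesis unfolding Gamma_def by blast
qed

lemma Gamma_Union_closed:
  assumes "is_zero m z" and "K \<subseteq> Gamma m"
  shows "\<Union>K \<in> Gamma m"
proof -
  define \<B> where "\<B> = {B \<in> bi_ideals m. O_set m B \<in> K}"
  have "\<Union>K = (\<Union>B\<in>\<B>. O_set m B)"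
    using assms(2) unfolding \<B>_def Gamma_def by blast
  also have "\<dots> = O_set m (gen_bi_ideal m (\<Union>\<B>))"
    by (rule O_set_gen_Union[symmetric])
  finally show ?thesis
    using bi_ideal_gen_bi_ideal[OF assms(1)] unfolding Gamma_def bi_ideals_def by blast
qed

lemma topology_on_Gamma:
  assumes "is_zero m z"
  shows "topology_on (Omega m) (Gamma m)"
proof -
  have "Gamma m \<subseteq> Pow (Omega m)" unfolding Gamma_def O_set_def by blast
  moreover have "Omega m \<in> Gamma m"
    unfolding Gamma_def bi_ideals_def O_set_UNIV[symmetric] using bi_ideal_UNIV by blast
  moreover have "istopology (\<lambda>U. U \<in> Gamma m)"
    unfolding istopology_def
    using Gamma_Int_closed[OF assms] Gamma_Union_closed[OF assms] by (simp add: subset_iff)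
  ultimately show ?thesis unfolding topology_on_def by blast
qed

theorem theorem2:
  fixes m :: "'a \<Rightarrow> 'a \<Rightarrow> 'a" and z :: 'a
  assumes "AG_groupoid m" and "is_zero m z"
  shows "topology_on (Omega m) (Gamma m)
    \<and> (\<forall>B1 \<in> bi_ideals m. \<forall>B2 \<in> bi_ideals m.
          O_set m (B1 \<inter> B2) = O_set m B1 \<inter> O_set m B2)
    \<and> (\<forall>\<B>. \<B> \<subseteq> bi_ideals m \<longrightarrow>
          O_set m (gen_bi_ideal m (\<Union>\<B>)) = (\<Union>B\<in>\<B>. O_set m B))"
proof (intro conjI ballI allI impI)
  show "topology_on (Omega m) (Gamma m)" by (rule topology_on_Gamma[OF assms(2)])
  show "O_set m (B1 \<inter> B2) = O_set m B1 \<inter> O_set m B2"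
    if "B1 \<in> bi_ideals m" and "B2 \<in> bi_ideals m" for B1 B2
    using that unfolding bi_ideals_def by (simp add: O_set_Int)
  show "O_set m (gen_bi_ideal m (\<Union>\<B>)) = (\<Union>B\<in>\<B>. O_set m B)" for \<B>
    by (rule O_set_gen_Union)
qed

end
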